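(* Let $K(1,3)$ be the Kolakoski sequence over $\{1,3\}$ and let $B_n$ ($n\ge1$) be as defined in the context. Then for all $n\ge 1$: (i) $B_n$ is the prefix of $K(1,3)$ of length $|B_n|$; (ii) $B_{n+1}=\mathcal{G}(R(B_n),1)$. Consequently $K(1,3)=\lim_{n\to\infty}B_n$.
   Context: $K(1,3)$ is the unique infinite sequence over the alphabet $\{1,3\}$ beginning with $1$ that equals its own run-length encoding, i.e. the sequence of lengths of its maximal runs of equal symbols is the sequence itself ($K(1,3)=1\,3\,3\,3\,1\,1\,1\,3\,3\,3\,1\,3\dots$). Generation operator: for a finite vector $R=\langle r_1,\dots,r_m\rangle$ of positive integers and $s\in\{1,3\}$, $\mathcal{G}(R,s)= s^{r_1}\,(4-s)^{r_2}\,s^{r_3}\cdots$ (the $i$-th run consists of $r_i$ copies of $s$ if $i$ is odd and of $4-s$ if $i$ is even), of length $\sum_i r_i$. For a finite word $W$ over $\{1,3\}$, $R(W)$ denotes $W$ itself regarded as a vector of positive integers. Define $B_1=\mathcal{G}(\langle 1,3,3,3,1\rangle,1)=1\,3\,3\,3\,1\,1\,1\,3\,3\,3\,1$, $P_1=3$, and for $n\ge1$: $B_{n+1}=B_n\,P_n\,B_n$ (concatenation), $P_{n+1}=\mathcal{G}(R(P_n),3)$. The limit $\lim B_n$ is meaningful since each $B_n$ is a prefix of $B_{n+1}$. *)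

theory Defs
  imports Main "HOL-Library.Infinite_Set"
begin

definition run_starts :: "(nat \<Rightarrow> nat) \<Rightarrow> nat set" where
  "run_starts x = {i. i = 0 \<or> x i \<noteq> x (i - 1)}"

text \<open>Length of the j-th (0-indexed) maximal run, assuming infinitely many runs.\<close>
definition run_length :: "(nat \<Rightarrow> nat) \<Rightarrow> nat \<Rightarrow> nat" where
  "run_length x j = enumerate (run_starts x) (Suc j) - enumerate (run_starts x) j"

definition self_rle :: "(nat \<Rightarrow> nat) \<Rightarrow> bool" where
  "self_rle x \<longleftrightarrow> infinite (run_starts x) \<and> (\<forall>j. run_length x j = x j)"

definition is_K13 :: "(nat \<Rightarrow> nat) \<Rightarrow> bool" where
  "is_K13 x \<longleftrightarrow> (\<forall>i. x i \<in> {1, 3}) \<and> x 0 = 1 \<and> self_rle x"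

definition gen :: "nat list \<Rightarrow> nat \<Rightarrow> nat list" where
  "gen R s = concat (map (\<lambda>i. replicate (R ! i) (if even i then s else 4 - s)) [0..<length R])"

text \<open>bp n = (B_(n+1), P_(n+1)).\<close>
fun bp :: "nat \<Rightarrow> nat list \<times> nat list" where
  "bp 0 = (gen [1,3,3,3,1] 1, [3])"
| "bp (Suc n) = (let (b, p) = bp n in (b @ p @ b, gen p 3))"

definition B :: "nat \<Rightarrow> nat list" where
  "B n = fst (bp (n - 1))"

definition P :: "nat \<Rightarrow> nat list" where
  "P n = snd (bp (n - 1))"

end

theory Submission
  imports Defs
begin

text \<open>
  The generation operator is a monoid morphism up to a swap of the starting letter after an
  odd-length factor. As all B_n and P_n have odd length, it maps
  B_n P_n B_n to G(B_n,1) G(P_n,3) G(B_n,1), which gives (ii) by induction.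
  For (i), the j-th run of K(1,3) has length K j and letter 1 or 3 according to the parity of j,
  so G applied to a prefix of K(1,3) with starting letter 1 spells out the runs it encodes,
  i.e. yields again a prefix of K(1,3). Since B_1 = G(1 3 3 3 1, 1) and 1 3 3 3 1 is a prefix,
  (i) follows from (ii), and the lengths of the B_n grow without bound.
\<close>

lemma gen_Nil [simp]: "gen [] s = []"
  by (simp add: gen_def)

lemma gen_snoc:
  "gen (xs @ [x]) s = gen xs s @ replicate x (if even (length xs) then s else 4 - s)"
proof -
  have "map (\<lambda>i. replicate ((xs @ [x]) ! i) (if even i then s else 4 - s)) [0..<length xs]
      = map (\<lambda>i. replicate (xs ! i) (if even i then s else 4 - s)) [0..<length xs]"
    by (rule map_cong) (auto simp: nth_append)
  then show ?thesis
    unfolding gen_def by (simp del: map_eq_conv)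
qed

lemma gen_append:
  assumes "s \<le> 4"
  shows "gen (u @ v) s = gen u s @ gen v (if even (length u) then s else 4 - s)"
proof (induction v rule: rev_induct)
  case Nil
  then show ?case by simp
next
  case (snoc x v)
  have "gen (u @ v @ [x]) s
      = gen (u @ v) s @ replicate x (if even (length u + length v) then s else 4 - s)"
    using gen_snoc[of "u @ v" x s] by simp
  also have "\<dots> = gen u s @ gen (v @ [x]) (if even (length u) then s else 4 - s)"
    using snoc assms by (simp add: gen_snoc)
  finally show ?case by simp
qed

lemma gen_Cons: "s \<le> 4 \<Longrightarrow> gen (x # xs) s = replicate x s @ gen xs (4 - s)"
  using gen_append[of s "[x]" xs] gen_snoc[of "[]" x s] by simp

lemma length_gen: "length (gen xs s) = sum_list xs"
  by (induction xs rule: rev_induct) (simp_all add: gen_snoc)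

lemma set_gen: "set (gen xs s) \<subseteq> {s, 4 - s}"
  by (induction xs rule: rev_induct) (auto simp: gen_snoc)

lemma odd_sum_list_iff_odd_length:
  "set xs \<subseteq> {1, 3::nat} \<Longrightarrow> odd (sum_list xs) \<longleftrightarrow> odd (length xs)"
  by (induction xs) auto

lemma set_snd_bp: "set (snd (bp k)) \<subseteq> {1, 3}"
proof (cases k)
  case (Suc k')
  then show ?thesis
    using set_gen[of "snd (bp k')" 3] by (auto split: prod.splits)
qed simp

lemma odd_length_snd_bp: "odd (length (snd (bp k)))"
proof (induction k)
  case (Suc k)
  obtain b p where bp: "bp k = (b, p)"
    by fastforce
  then have "set p \<subseteq> {1, 3}"
    using set_snd_bp[of k] by simp
  with Suc bp show ?case
    by (simp add: length_gen odd_sum_list_iff_odd_length)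
qed simp

lemma odd_length_fst_bp: "odd (length (fst (bp k)))"
proof (induction k)
  case (Suc k)
  obtain b p where bp: "bp k = (b, p)"
    by fastforce
  with Suc odd_length_snd_bp[of k] show ?case
    by simp
qed (simp add: gen_def)

lemma fst_bp_Suc_eq_gen: "fst (bp (Suc k)) = gen (fst (bp k)) 1"
proof (induction k)
  case 0
  show ?case by (simp add: gen_Cons numeral_3_eq_3)
next
  case (Suc k)
  obtain b p where bp: "bp k = (b, p)"
    by fastforce
  have "odd (length b)" "odd (length p)"
    using odd_length_fst_bp[of k] odd_length_snd_bp[of k] bp by simp_all
  then have "gen (b @ p @ b) 1 = gen b 1 @ gen p 3 @ gen b 1"
    using gen_append[of 1 b "p @ b"] gen_append[of 3 p b] by simp
  moreover have "gen b 1 = b @ p @ b"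
    using Suc bp by simp
  ultimately show ?case
    using bp by simp
qed

lemma B_Suc_eq_gen: "1 \<le> n \<Longrightarrow> B (Suc n) = gen (B n) 1"
  using fst_bp_Suc_eq_gen[of "n - 1"] by (simp add: B_def)

lemma length_B_less_length_B_Suc: "1 \<le> n \<Longrightarrow> length (B n) < length (B (Suc n))"
proof -
  assume "1 \<le> n"
  then obtain k where n: "n = Suc k"
    by (cases n) auto
  obtain b p where bp: "bp k = (b, p)"
    by fastforce
  have "p \<noteq> []"
    using odd_length_snd_bp[of k] bp by auto
  with bp show ?thesis
    by (simp add: n B_def)
qed

lemma le_length_B: "n \<le> length (B n)"
proof (induction n)
  case (Suc n)
  show ?case
  proof (cases n)
    case 0
    then show ?thesis by (simp add: B_def gen_def)
  next
    case (Suc m)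
    then show ?thesis
      using Suc.IH length_B_less_length_B_Suc[of n] by simp
  qed
qed simp

context
  fixes x :: "nat \<Rightarrow> nat"
  assumes self_rle: "self_rle x"
begin

abbreviation run_start :: "nat \<Rightarrow> nat" where
  "run_start \<equiv> enumerate (run_starts x)"

lemma infinite_run_starts: "infinite (run_starts x)"
  using self_rle by (simp add: self_rle_def)

lemma run_start_0: "run_start 0 = 0"
  by (simp add: run_starts_def enumerate_0 Least_eq_0)

lemma run_start_Suc: "run_start (Suc j) = run_start j + x j"
proof -
  have "run_length x j = x j"
    using self_rle by (simp add: self_rle_def)
  moreover have "run_start j < run_start (Suc j)"
    using infinite_run_starts by simp
  ultimately show ?thesis
    by (simp add: run_length_def)
qed

lemma not_in_run_starts_between:
  assumes "run_start j < t" "t < run_start (Suc j)"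
  shows "t \<notin> run_starts x"
proof
  assume "t \<in> run_starts x"
  then obtain m where "run_start m = t"
    using enumerate_Ex[OF infinite_run_starts] by blast
  then have "j < m" "m < Suc j"
    using assms infinite_run_starts by auto
  then show False by simp
qed

lemma constant_on_run:
  "run_start j + d < run_start (Suc j) \<Longrightarrow> x (run_start j + d) = x (run_start j)"
proof (induction d)
  case (Suc d)
  then have "run_start j + Suc d \<notin> run_starts x"
    using not_in_run_starts_between[of j "run_start j + Suc d"] by simp
  then show ?case
    using Suc by (simp add: run_starts_def)
qed simp

lemma letter_at_run_start:
  assumes letters: "\<forall>i. x i \<in> {1, 3}" and "x 0 = 1"
  shows "x (run_start j) = (if even j then 1 else 3)"
proof (induction j)
  case 0
  show ?case using \<open>x 0 = 1\<close> run_start_0 by simp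
next
  case (Suc j)
  have x_j: "x j \<in> {1, 3}"
    using letters by blast
  have "x (run_start (Suc j) - 1) = x (run_start j)"
    using constant_on_run[of j "x j - 1"] run_start_Suc[of j] x_j by auto
  moreover have "x (run_start (Suc j)) \<noteq> x (run_start (Suc j) - 1)"
  proof -
    have "run_start (Suc j) \<in> run_starts x"
      using enumerate_in_set[OF infinite_run_starts] .
    moreover have "run_start (Suc j) \<noteq> 0"
      using run_start_Suc[of j] x_j by auto
    ultimately show ?thesis
      by (simp add: run_starts_def)
  qed
  ultimately show ?case
    using Suc letters[rule_format, of "run_start (Suc j)"] by auto
qed

lemma map_run:
  assumes "\<forall>i. x i \<in> {1, 3}" "x 0 = 1"
  shows "map x [run_start j..<run_start (Suc j)] = replicate (x j) (if even j then 1 else 3)"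
proof (rule nth_equalityI)
  fix i
  assume "i < length (map x [run_start j..<run_start (Suc j)])"
  then have "run_start j + i < run_start (Suc j)"
    by simp
  then show "map x [run_start j..<run_start (Suc j)] ! i
      = replicate (x j) (if even j then 1 else 3) ! i"
    using constant_on_run letter_at_run_start[OF assms, of j] run_start_Suc[of j] by simp
qed (simp add: run_start_Suc)

lemma gen_map_prefix:
  assumes "\<forall>i. x i \<in> {1, 3}" "x 0 = 1"
  shows "gen (map x [0..<m]) 1 = map x [0..<run_start m]"
proof (induction m)
  case 0
  show ?case using run_start_0 by simp
next
  case (Suc m)
  have "[0..<run_start (Suc m)] = [0..<run_start m] @ [run_start m..<run_start (Suc m)]"
    using run_start_Suc[of m] upt_add_eq_append[of 0 "run_start m" "x m"] by simp
  then show ?case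
    using Suc map_run[OF assms, of m] by (simp add: gen_snoc)
qed

end

lemma gen_K13_prefix:
  assumes "is_K13 K" "w = map K [0..<length w]"
  shows "gen w 1 = map K [0..<length (gen w 1)]"
  using assms gen_map_prefix[of K "length w"] by (simp add: is_K13_def)

lemma K13_prefix_5:
  assumes "is_K13 K"
  shows "map K [0..<5] = [1, 3, 3, 3, 1]"
proof -
  have self_rle: "self_rle K" and letters: "\<forall>i. K i \<in> {1, 3}" and "K 0 = 1"
    using assms by (simp_all add: is_K13_def)
  note letter = letter_at_run_start[OF self_rle letters \<open>K 0 = 1\<close>]
  have start_1: "run_start K 1 = 1"
    using run_start_Suc[OF self_rle, of 0] run_start_0[OF self_rle] \<open>K 0 = 1\<close> by simp
  have "K 1 = 3"
    using letter[of 1] start_1 by simp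
  then have start_2: "run_start K 2 = 4"
    using run_start_Suc[OF self_rle, of 1] start_1 by (simp add: numeral_2_eq_2)
  have "map K [0..<2] = [1, 3]"
    using \<open>K 0 = 1\<close> \<open>K 1 = 3\<close> by (simp add: numeral_2_eq_2)
  then have "map K [0..<4] = gen [1, 3] 1"
    using gen_map_prefix[OF self_rle letters \<open>K 0 = 1\<close>, of 2] start_2 by simp
  also have "\<dots> = [1, 3, 3, 3]"
    by (simp add: gen_Cons numeral_3_eq_3)
  finally have "map K [0..<4] = [1, 3, 3, 3]" .
  moreover have "K 4 = 1"
    using letter[of 2] start_2 by simp
  ultimately show ?thesis
    by (simp only: upt_Suc_append[of 0 4, simplified] map_append list.map append.simps)
qed

lemma B_eq_K13_prefix:
  assumes "is_K13 K" "1 \<le> n"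
  shows "B n = map K [0..<length (B n)]"
  using assms(2)
proof (induction n rule: dec_induct)
  case base
  have "[1, 3, 3, 3, 1] = map K [0..<length [1, 3, 3, 3, 1::nat]]"
    unfolding K13_prefix_5[OF assms(1), symmetric] by simp
  moreover have "B 1 = gen [1, 3, 3, 3, 1] 1"
    by (simp add: B_def)
  ultimately show ?case
    using gen_K13_prefix[OF assms(1)] by metis
next
  case (step n)
  then show ?case
    using gen_K13_prefix[OF assms(1)] B_Suc_eq_gen by metis
qed

lemma nth_B_eq_K13:
  assumes "is_K13 K" "i < n"
  shows "i < length (B n) \<and> B n ! i = K i"
proof -
  have "1 \<le> n" "i < length (B n)"
    using assms(2) le_length_B[of n] by auto
  then show ?thesis
    by (subst B_eq_K13_prefix[OF assms(1)]) simp_all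
qed

theorem theorem4p1:
  fixes K :: "nat \<Rightarrow> nat"
  assumes "is_K13 K"
  shows "(\<forall>n\<ge>1. B n = map K [0..<length (B n)] \<and> B (Suc n) = gen (B n) 1)
     \<and> (\<forall>i. \<exists>N. \<forall>n\<ge>N. i < length (B n) \<and> B n ! i = K i)"
proof (intro conjI allI impI)
  fix n :: nat
  assume "n \<ge> 1"
  then show "B n = map K [0..<length (B n)]" "B (Suc n) = gen (B n) 1"
    using B_eq_K13_prefix[OF assms] B_Suc_eq_gen by simp_all
next
  fix i
  show "\<exists>N. \<forall>n\<ge>N. i < length (B n) \<and> B n ! i = K i"
    using nth_B_eq_K13[OF assms] Suc_le_eq by blast
qed

end
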